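(* Let $\Theta$ be a nuclear contracting Dwork operator on $M^*$, and let $b$ be a positive integer with $b\le b_\sigma$, and $c,c_1$ rational numbers, such that $\Theta(M^*(b,c))\subset M^*(qb,c+c_1)$. Let $G=(G_{\{u,j_1\},\{v,j_2\}})$ be the matrix of the $K$-linear map induced by $\Theta$ on $M^*(b,0)\otimes K$ with respect to the basis $\{\pi^{b|u|}X^ue_j^*\}$, i.e. $\Theta(\pi^{b|v|}X^ve_{j_2}^* )=\sum_{u,j_1}G_{\{u,j_1\},\{v,j_2\}}\pi^{b|u|}X^ue_{j_1}^*$. Then for every constant $C>0$, except for finitely many row indices $\{u,j_1\}$, we have $\mathrm{ord}_\pi G_{\{u,j_1\},\{v,j_2\}}\ge C$ for all column indices $\{v,j_2\}$.
   Context: $R$ is a complete discrete valuation ring of characteristic $0$ with uniformizer $\pi$, residue field $\mathbf{F}_q$, fraction field $K$, valuation $\mathrm{ord}_\pi$, $|a|_\pi=p^{-\mathrm{ord}_\pi a}$. Fix $n\ge1$; $X^u=\prod X_i^{u_i}$, $|u|=\sum u_i$ for $u\in\mathbf{Z}^n_{\ge0}$. $A_0=\{\sum a_uX^u:a_u\in R,\ |a_u|_\pi\to0\}$ with Gauss norm $\|\cdot\|$ (max of $|a_u|_\pi$), $A=\{\sum a_uX^u\in A_0:\liminf_{|u|\to\infty}\mathrm{ord}_\pi a_u/|u|>0\}$. $\sigma$ is an $R$-algebra endomorphism of $A_0$ with $\sigma(X_i)=X_i^q+\pi f_i$, $f_i\in A$. For $b>0,c$: $L(b,c)=\{\sum a_vX^v:\mathrm{ord}_\pi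 a_v\ge b|v|+c\}$; $b_\sigma>0$ is a fixed rational with $\pi f_i\in L(b_\sigma,0)$ for all $i$. Let $\{e_j^*\}$ be indexed by an at most countable set and $M^*=\{\sum_ja_je_j^*:a_j\in A_0,\ \|a_j\|\to0\}$ (the continuous dual $\mathrm{Hom}^{\mathrm{cont}}_{A_0}(M,\Omega^nA_0)$ of a Banach module $M$ with formal basis $\{e_j\}$, with $e_j^*$ the dual basis), $M^{*\dagger}=\{\sum a_je_j^*\in M^*:a_j\in A\}$, $M^*(b,c)=\{\sum a_je_j^*\in M^*: a_j\in L(b,c)\}$. A Dwork operator on $M^*$ is a continuous $R$-linear endomorphism $\Theta$ of $M^*$ with $\Theta(\sigma(a)f)=a\Theta(f)$ ($a\in A_0$, $f\in M^*$). Writing $\Theta(X^ve_{j_2}^* )=\sum_{u,j_1}G^*_{\{u,j_1\},\{v,j_2\}}X^ue_{j_1}^*$ with $G^*\in R$, $\Theta$ is nuclear if for each fixed $u,v$, $\lim_{j_1\to\infty}\inf_{j_2}\mathrm{ord}_\pi G^*_{\{u,j_1\},\{v,j_2\}}=\infty$. $\Theta$ is contracting if there are rationals $b>0,c,c_1$ with $\Theta(M^*(b,c))\subset M^*(qb,c+c_1)$. *)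

theory Defs
  imports "HOL-Analysis.Analysis" "HOL-Library.Function_Algebras"
begin

text \<open>K is a field of characteristic 0 (type 'k), ord is a discrete valuation
 on K (meaningful on nonzero elements), unif a uniformizer, R = {x. ord x >= 0} \<union> {0}
 the valuation ring. Monomial exponents u in Z_{>=0}^n are functions 'n => nat with
 'n a finite (nonempty) type of cardinality n. Formal power series are coefficient
 functions ('n => nat) => 'k; elements of M^* are families indexed by 'j of such series.\<close>

definition vge :: "('k::zero \<Rightarrow> int) \<Rightarrow> 'k \<Rightarrow> real \<Rightarrow> bool" where
  "vge ord x r \<longleftrightarrow> x = 0 \<or> r \<le> real_of_int (ord x)"
  \<comment> \<open>ord_pi x >= r, with ord_pi 0 = infinity\<close>

definition Rset :: "('k::zero \<Rightarrow> int) \<Rightarrow> 'k set" where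
  "Rset ord = {x. vge ord x 0}"

text \<open>complete DVR of characteristic 0 with uniformizer unif and residue field of q elements\<close>
definition cdvr :: "('k::field_char_0 \<Rightarrow> int) \<Rightarrow> 'k \<Rightarrow> nat \<Rightarrow> bool" where
  "cdvr ord unif q \<longleftrightarrow>
     (\<forall>x y. x \<noteq> 0 \<longrightarrow> y \<noteq> 0 \<longrightarrow> ord (x * y) = ord x + ord y) \<and>
     (\<forall>x y. x \<noteq> 0 \<longrightarrow> y \<noteq> 0 \<longrightarrow> x + y \<noteq> 0 \<longrightarrow> min (ord x) (ord y) \<le> ord (x + y)) \<and>
     unif \<noteq> 0 \<and> ord unif = 1 \<and>
     (\<forall>s::nat \<Rightarrow> 'k. (\<forall>m. s m \<in> Rset ord) \<longrightarrow>
        (\<forall>N. \<exists>M. \<forall>m\<ge>M. \<forall>m'\<ge>M. vge ord (s m - s m') N) \<longrightarrow>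
        (\<exists>L\<in>Rset ord. \<forall>N. \<exists>M. \<forall>m\<ge>M. vge ord (s m - L) N)) \<and>
     (\<exists>S. S \<subseteq> Rset ord \<and> finite S \<and> card S = q \<and>
        (\<forall>s\<in>S. \<forall>t\<in>S. s \<noteq> t \<longrightarrow> \<not> vge ord (s - t) 1) \<and>
        (\<forall>x\<in>Rset ord. \<exists>s\<in>S. vge ord (x - s) 1))"

definition absdeg :: "('n::finite \<Rightarrow> nat) \<Rightarrow> nat" where
  "absdeg u = (\<Sum>i\<in>UNIV. u i)"

definition A0 :: "('k::field \<Rightarrow> int) \<Rightarrow> (('n::finite \<Rightarrow> nat) \<Rightarrow> 'k) set" where
  "A0 ord = {a. (\<forall>u. a u \<in> Rset ord) \<and> (\<forall>N::real. finite {u. \<not> vge ord (a u) N})}"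

text \<open>A: liminf_{|u| -> oo} ord a_u / |u| > 0, unfolded\<close>
definition Aset :: "('k::field \<Rightarrow> int) \<Rightarrow> (('n::finite \<Rightarrow> nat) \<Rightarrow> 'k) set" where
  "Aset ord = {a \<in> A0 ord. \<exists>\<epsilon>>0. \<exists>N::nat. \<forall>u. N \<le> absdeg u \<longrightarrow>
                 vge ord (a u) (\<epsilon> * real (absdeg u))}"

definition Lset :: "('k::field \<Rightarrow> int) \<Rightarrow> real \<Rightarrow> real \<Rightarrow> (('n::finite \<Rightarrow> nat) \<Rightarrow> 'k) set" where
  "Lset ord b c = {a. \<forall>u. vge ord (a u) (b * real (absdeg u) + c)}"

definition pmul :: "(('n::finite \<Rightarrow> nat) \<Rightarrow> 'k::comm_ring_1) \<Rightarrow> (('n \<Rightarrow> nat) \<Rightarrow> 'k) \<Rightarrow> ('n \<Rightarrow> nat) \<Rightarrow> 'k" where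
  "pmul a b u = (\<Sum>w\<in>{w. w \<le> u}. a w * b (u - w))"

definition monom :: "('n \<Rightarrow> nat) \<Rightarrow> ('n \<Rightarrow> nat) \<Rightarrow> 'k::comm_ring_1" where
  "monom u = (\<lambda>w. if w = u then 1 else 0)"

definition Xpow :: "'n \<Rightarrow> nat \<Rightarrow> ('n \<Rightarrow> nat) \<Rightarrow> 'k::comm_ring_1" where
  "Xpow i e = monom (\<lambda>k. if k = i then e else 0)"

definition pconst :: "'k::comm_ring_1 \<Rightarrow> ('n \<Rightarrow> nat) \<Rightarrow> 'k" where
  "pconst r = (\<lambda>w. if w = (\<lambda>_. 0) then r else 0)"

definition frobenius_lift ::
  "('k::field_char_0 \<Rightarrow> int) \<Rightarrow> 'k \<Rightarrow> nat \<Rightarrow> ('n::finite \<Rightarrow> ('n \<Rightarrow> nat) \<Rightarrow> 'k)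
   \<Rightarrow> ((('n \<Rightarrow> nat) \<Rightarrow> 'k) \<Rightarrow> (('n \<Rightarrow> nat) \<Rightarrow> 'k)) \<Rightarrow> bool" where
  "frobenius_lift ord unif q f \<sigma> \<longleftrightarrow>
     (\<forall>a\<in>A0 ord. \<sigma> a \<in> A0 ord) \<and>
     (\<forall>a\<in>A0 ord. \<forall>b\<in>A0 ord. \<sigma> (a + b) = \<sigma> a + \<sigma> b \<and> \<sigma> (pmul a b) = pmul (\<sigma> a) (\<sigma> b)) \<and>
     \<sigma> (pconst 1) = pconst 1 \<and>
     (\<forall>r\<in>Rset ord. \<forall>a\<in>A0 ord. \<sigma> (\<lambda>u. r * a u) = (\<lambda>u. r * \<sigma> a u)) \<and>
     (\<forall>i. f i \<in> Aset ord \<and> \<sigma> (Xpow i 1) = (\<lambda>u. Xpow i q u + unif * f i u))"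

text \<open>M^* = {sum_j a_j e_j^* : a_j in A_0, ||a_j|| -> 0}, an element being the family (a_j)_j\<close>
definition Mstar :: "('k::field \<Rightarrow> int) \<Rightarrow> ('j \<Rightarrow> ('n::finite \<Rightarrow> nat) \<Rightarrow> 'k) set" where
  "Mstar ord = {F. (\<forall>j. F j \<in> A0 ord) \<and>
                   (\<forall>N::real. finite {j. \<not> (\<forall>u. vge ord (F j u) N)})}"

definition Mstar_bc :: "('k::field \<Rightarrow> int) \<Rightarrow> real \<Rightarrow> real \<Rightarrow> ('j \<Rightarrow> ('n::finite \<Rightarrow> nat) \<Rightarrow> 'k) set" where
  "Mstar_bc ord b c = {F \<in> Mstar ord. \<forall>j. F j \<in> Lset ord b c}"

definition smulM :: "(('n::finite \<Rightarrow> nat) \<Rightarrow> 'k::comm_ring_1) \<Rightarrow> ('j \<Rightarrow> ('n \<Rightarrow> nat) \<Rightarrow> 'k) \<Rightarrow> ('j \<Rightarrow> ('n \<Rightarrow> nat) \<Rightarrow> 'k)" where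
  "smulM a F = (\<lambda>j. pmul a (F j))"

type_synonym ('j,'n,'k) mstar_op = "('j \<Rightarrow> ('n \<Rightarrow> nat) \<Rightarrow> 'k) \<Rightarrow> ('j \<Rightarrow> ('n \<Rightarrow> nat) \<Rightarrow> 'k)"

definition dwork_operator ::
  "('k::field_char_0 \<Rightarrow> int) \<Rightarrow> ((('n::finite \<Rightarrow> nat) \<Rightarrow> 'k) \<Rightarrow> (('n \<Rightarrow> nat) \<Rightarrow> 'k))
   \<Rightarrow> ('j,'n,'k) mstar_op \<Rightarrow> bool" where
  "dwork_operator ord \<sigma> \<Theta> \<longleftrightarrow>
     (\<forall>F\<in>Mstar ord. \<Theta> F \<in> Mstar ord) \<and>
     (\<forall>F\<in>Mstar ord. \<forall>G\<in>Mstar ord. \<Theta> (F + G) = \<Theta> F + \<Theta> G) \<and>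
     (\<forall>r\<in>Rset ord. \<forall>F\<in>Mstar ord. \<Theta> (\<lambda>j u. r * F j u) = (\<lambda>j u. r * \<Theta> F j u)) \<and>
     (\<forall>F\<in>Mstar ord. \<forall>N::real. \<exists>N'::real. \<forall>G\<in>Mstar ord.
        (\<forall>j u. vge ord (G j u - F j u) N') \<longrightarrow> (\<forall>j u. vge ord (\<Theta> G j u - \<Theta> F j u) N)) \<and>
     (\<forall>a\<in>A0 ord. \<forall>F\<in>Mstar ord. \<Theta> (smulM (\<sigma> a) F) = smulM a (\<Theta> F))"

text \<open>basis element X^w e_j^*\<close>
definition basisM :: "('n \<Rightarrow> nat) \<Rightarrow> 'j \<Rightarrow> 'j \<Rightarrow> ('n \<Rightarrow> nat) \<Rightarrow> 'k::comm_ring_1" where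
  "basisM w j = (\<lambda>j' u. if j' = j \<and> u = w then 1 else 0)"

definition Gstar :: "('j,'n,'k::comm_ring_1) mstar_op \<Rightarrow> ('n \<Rightarrow> nat) \<Rightarrow> 'j \<Rightarrow> ('n \<Rightarrow> nat) \<Rightarrow> 'j \<Rightarrow> 'k" where
  "Gstar \<Theta> u j1 w j2 = \<Theta> (basisM w j2) j1 u"

definition nuclear :: "('k::field \<Rightarrow> int) \<Rightarrow> ('j,'n,'k) mstar_op \<Rightarrow> bool" where
  "nuclear ord \<Theta> \<longleftrightarrow> (\<forall>u w. \<forall>C::real.
      eventually (\<lambda>j1. \<forall>j2. vge ord (Gstar \<Theta> u j1 w j2) C) cofinite)"

definition contracting :: "('k::field \<Rightarrow> int) \<Rightarrow> nat \<Rightarrow> ('j,'n::finite,'k) mstar_op \<Rightarrow> bool" where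
  "contracting ord q \<Theta> \<longleftrightarrow> (\<exists>b c c1. b \<in> \<rat> \<and> c \<in> \<rat> \<and> c1 \<in> \<rat> \<and> b > 0 \<and>
      \<Theta> ` Mstar_bc ord b c \<subseteq> Mstar_bc ord (real q * b) (c + c1))"

text \<open>G_{(u,j1),(w,j2)}: matrix w.r.t. basis unif^{b|u|} X^u e_j^*, i.e.
  Theta(unif^{b|w|} X^w e_{j2}^*) = sum G_{(u,j1),(w,j2)} unif^{b|u|} X^u e_{j1}^*\<close>
definition Gmat :: "'k::field \<Rightarrow> nat \<Rightarrow> ('j,'n::finite,'k) mstar_op \<Rightarrow> ('n \<Rightarrow> nat) \<Rightarrow> 'j \<Rightarrow> ('n \<Rightarrow> nat) \<Rightarrow> 'j \<Rightarrow> 'k" where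
  "Gmat unif b \<Theta> u j1 w j2 =
     \<Theta> (\<lambda>j' u'. if j' = j2 \<and> u' = w then unif ^ (b * absdeg w) else 0) j1 u / unif ^ (b * absdeg u)"

end

theory Submission
  imports Defs
begin

text \<open>Write \<open>G = \<pi>\<^bsup>b|w|\<^esup> G\<^sup>* / \<pi>\<^bsup>b|u|\<^esup>\<close>, where \<open>G\<^sup>*\<close> is the matrix of \<open>\<Theta>\<close> on the basis \<open>X\<^sup>w e\<^sub>j\<^sup>*\<close>.
  For rows of large degree \<open>|u|\<close> the contraction \<open>M\<^sup>*(b,c) \<rightarrow> M\<^sup>*(qb,c+c\<^sub>1)\<close> gives
  \<open>ord G \<ge> (q-1)b|u| + const\<close>, which exceeds any \<open>C\<close> because \<open>q \<ge> 2\<close>. Only finitely many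
  monomials \<open>u\<close> remain, and for each of them continuity of \<open>\<Theta>\<close> at \<open>0\<close> makes
  \<open>\<pi>\<^bsup>b|w|\<^esup> G\<^sup>*\<close> small for all columns of large degree \<open>|w|\<close>, while nuclearity handles the
  finitely many remaining \<open>w\<close>, excluding only finitely many \<open>j\<^sub>1\<close>.
  Neither \<open>\<sigma>\<close>, \<open>b\<^sub>\<sigma>\<close>, the rationality of the constants, nor the abstract hypothesis
  \<open>contracting\<close> (superseded by the explicit inclusion) enters this estimate.\<close>

lemma vge_mono: "vge ord x r \<Longrightarrow> r' \<le> r \<Longrightarrow> vge ord x r'"
  by (auto simp: vge_def)

lemma vge_zero [simp]: "vge ord 0 r"
  by (simp add: vge_def)

lemma finite_absdeg_less: "finite {u::'n::finite \<Rightarrow> nat. absdeg u < N}"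
proof (rule finite_subset)
  show "{u::'n \<Rightarrow> nat. absdeg u < N} \<subseteq> Pi\<^sub>E UNIV (\<lambda>_. {..N})"
  proof
    fix u :: "'n \<Rightarrow> nat"
    assume "u \<in> {u. absdeg u < N}"
    then have "u i \<le> N" for i
      using member_le_sum[of i UNIV u] unfolding absdeg_def by simp
    then show "u \<in> Pi\<^sub>E UNIV (\<lambda>_. {..N})"
      by (simp add: PiE_UNIV_domain)
  qed
  show "finite (Pi\<^sub>E (UNIV::'n set) (\<lambda>_. {..N}))"
    by (simp add: finite_PiE)
qed

lemma zero_in_Mstar: "0 \<in> Mstar ord"
  unfolding Mstar_def A0_def Rset_def by simp

lemma dwork_operator_add:
  assumes "dwork_operator ord \<sigma> \<Theta>" "F \<in> Mstar ord" "G \<in> Mstar ord"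
  shows "\<Theta> (F + G) = \<Theta> F + \<Theta> G"
proof -
  have "\<forall>F\<in>Mstar ord. \<forall>G\<in>Mstar ord. \<Theta> (F + G) = \<Theta> F + \<Theta> G"
    using assms(1) unfolding dwork_operator_def by (elim conjE)
  from this[rule_format, OF assms(2,3)] show ?thesis .
qed

lemma dwork_operator_smul:
  assumes "dwork_operator ord \<sigma> \<Theta>" "r \<in> Rset ord" "F \<in> Mstar ord"
  shows "\<Theta> (\<lambda>j u. r * F j u) = (\<lambda>j u. r * \<Theta> F j u)"
proof -
  have "\<forall>r\<in>Rset ord. \<forall>F\<in>Mstar ord. \<Theta> (\<lambda>j u. r * F j u) = (\<lambda>j u. r * \<Theta> F j u)"
    using assms(1) unfolding dwork_operator_def by (elim conjE)
  from this[rule_format, OF assms(2,3)] show ?thesis .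
qed

lemma dwork_operator_continuous_at:
  assumes "dwork_operator ord \<sigma> \<Theta>" "F \<in> Mstar ord"
  obtains N' where "\<And>G. G \<in> Mstar ord \<Longrightarrow> \<forall>j u. vge ord (G j u - F j u) N' \<Longrightarrow>
    \<forall>j u. vge ord (\<Theta> G j u - \<Theta> F j u) N"
proof -
  have "\<forall>F\<in>Mstar ord. \<forall>N::real. \<exists>N'::real. \<forall>G\<in>Mstar ord.
      (\<forall>j u. vge ord (G j u - F j u) N') \<longrightarrow> (\<forall>j u. vge ord (\<Theta> G j u - \<Theta> F j u) N)"
    using assms(1) unfolding dwork_operator_def by (elim conjE)
  then show ?thesis
    using assms(2) that by blast
qed

lemma dwork_operator_zero:
  assumes "dwork_operator ord \<sigma> \<Theta>"
  shows "\<Theta> 0 = 0"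
  using dwork_operator_add[OF assms zero_in_Mstar zero_in_Mstar] by simp

context
  fixes ord :: "'k::field_char_0 \<Rightarrow> int" and unif :: 'k and q :: nat
  assumes R: "cdvr ord unif q"
begin

lemma cdvr_ord_mult: "x \<noteq> 0 \<Longrightarrow> y \<noteq> 0 \<Longrightarrow> ord (x * y) = ord x + ord y"
  using R unfolding cdvr_def by blast

lemma cdvr_ord_one: "ord 1 = 0"
  using cdvr_ord_mult[of 1 1] by simp

lemma cdvr_ord_uminus: "ord (- x) = ord x"
proof (cases "x = 0")
  case False
  have "ord (-1) + ord (-1) = 0"
    using cdvr_ord_mult[of "-1" "-1"] cdvr_ord_one by simp
  then show ?thesis
    using cdvr_ord_mult[of "-1" x] False by simp
qed simp

lemma cdvr_unif_power: "unif ^ k \<noteq> 0" "ord (unif ^ k) = int k"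
proof -
  have unif: "unif \<noteq> 0" "ord unif = 1"
    using R unfolding cdvr_def by blast+
  then show "unif ^ k \<noteq> 0" by simp
  show "ord (unif ^ k) = int k"
    by (induction k) (simp_all add: cdvr_ord_one cdvr_ord_mult unif)
qed

lemma unif_power_in_Rset: "unif ^ k \<in> Rset ord"
  by (simp add: Rset_def vge_def cdvr_unif_power)

lemma cdvr_ord_add_ge_min:
  "x \<noteq> 0 \<Longrightarrow> y \<noteq> 0 \<Longrightarrow> x + y \<noteq> 0 \<Longrightarrow> min (ord x) (ord y) \<le> ord (x + y)"
  using R unfolding cdvr_def by simp

lemma vge_add:
  assumes "vge ord x r" "vge ord y r"
  shows "vge ord (x + y) r"
proof (cases "x = 0 \<or> y = 0 \<or> x + y = 0")
  case False
  then have "r \<le> min (ord x) (ord y)"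
    using assms by (simp add: vge_def)
  also have "\<dots> \<le> ord (x + y)"
    using False cdvr_ord_add_ge_min by simp
  finally show ?thesis
    by (simp add: vge_def)
qed (use assms in auto)

lemma vge_diff: "vge ord x r \<Longrightarrow> vge ord y r \<Longrightarrow> vge ord (x - y) r"
  using vge_add[of x r "- y"] by (simp add: vge_def cdvr_ord_uminus)

lemma vge_unif_power_mult_iff: "vge ord (unif ^ k * x) r \<longleftrightarrow> vge ord x (r - k)"
  using cdvr_unif_power[of k] by (cases "x = 0") (auto simp: vge_def cdvr_ord_mult)

lemma vge_divide_unif_power_iff: "vge ord (x / unif ^ k) r \<longleftrightarrow> vge ord x (r + k)"
proof -
  have "unif ^ k * (x / unif ^ k) = x"
    using cdvr_unif_power(1)[of k] by simp
  then show ?thesis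
    using vge_unif_power_mult_iff[of k "x / unif ^ k" "r + k"] by simp
qed

text \<open>If the residue field had at most one element, 0 and 1 would be congruent modulo \<open>unif\<close>.\<close>
lemma cdvr_residue_card_ge_2: "q \<ge> 2"
proof (rule ccontr)
  assume "\<not> q \<ge> 2"
  obtain S where S: "finite S" "card S = q" "\<forall>x\<in>Rset ord. \<exists>s\<in>S. vge ord (x - s) 1"
    using R unfolding cdvr_def by blast
  have "0 \<in> Rset ord" "1 \<in> Rset ord"
    by (auto simp: Rset_def vge_def cdvr_ord_one)
  then obtain s t where "s \<in> S" "t \<in> S" "vge ord (1 - s) 1" "vge ord (0 - t) 1"
    using S(3) by blast
  moreover have "card S \<le> Suc 0"
    using S(2) \<open>\<not> q \<ge> 2\<close> by simp
  then have "s = t"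
    using card_le_Suc0_iff_eq[OF S(1)] \<open>s \<in> S\<close> \<open>t \<in> S\<close> by blast
  ultimately have "vge ord ((1 - s) - (0 - s)) 1"
    using vge_diff by blast
  then show False
    by (simp add: vge_def cdvr_ord_one)
qed

lemma scaled_basisM_in_Mstar:
  assumes "r \<in> Rset ord"
  shows "(\<lambda>j u. r * basisM w j2 j u) \<in> Mstar ord"
proof -
  have "0 \<in> Rset ord"
    by (simp add: Rset_def)
  then show ?thesis
    using assms unfolding Mstar_def A0_def basisM_def
    by (auto intro: finite_subset[of _ "{w}"] finite_subset[of _ "{j2}"])
qed

lemma basisM_in_Mstar: "basisM w j2 \<in> Mstar ord"
  using scaled_basisM_in_Mstar[OF unif_power_in_Rset, of 0 w j2] by simp

lemma dwork_operator_scaled_basisM: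
  assumes "dwork_operator ord \<sigma> \<Theta>" "r \<in> Rset ord"
  shows "\<Theta> (\<lambda>j u. r * basisM w j2 j u) j1 u = r * Gstar \<Theta> u j1 w j2"
  by (simp add: dwork_operator_smul[OF assms basisM_in_Mstar] Gstar_def)

lemma Gmat_vge_iff:
  fixes \<Theta> :: "('j, 'n::finite, 'k) mstar_op"
  assumes "dwork_operator ord \<sigma> \<Theta>"
  shows "vge ord (Gmat unif b \<Theta> u j1 w j2) r \<longleftrightarrow>
    vge ord (unif ^ (b * absdeg w) * Gstar \<Theta> u j1 w j2) (r + real (b * absdeg u))"
proof -
  have "(\<lambda>j' u'. if j' = j2 \<and> u' = w then unif ^ (b * absdeg w) else 0) =
      (\<lambda>j u. unif ^ (b * absdeg w) * basisM w j2 j u)"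
    by (intro ext) (simp add: basisM_def)
  then show ?thesis
    using dwork_operator_scaled_basisM[OF assms unif_power_in_Rset]
    by (simp add: Gmat_def vge_divide_unif_power_iff)
qed

lemma contracting_Gstar_bound:
  fixes \<Theta> :: "('j, 'n::finite, 'k) mstar_op"
  assumes "dwork_operator ord \<sigma> \<Theta>"
    and "\<Theta> ` Mstar_bc ord b c \<subseteq> Mstar_bc ord b' c'"
    and "b * real (absdeg w) + c \<le> real k"
  shows "vge ord (unif ^ k * Gstar \<Theta> u j1 w j2) (b' * real (absdeg u) + c')"
proof -
  let ?F = "\<lambda>j u. unif ^ k * basisM w j2 j u"
  have "?F j \<in> Lset ord b c" for j
    using assms(3) by (auto simp: Lset_def basisM_def vge_def cdvr_unif_power)
  then have "?F \<in> Mstar_bc ord b c"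
    by (simp add: Mstar_bc_def scaled_basisM_in_Mstar unif_power_in_Rset)
  then have "\<Theta> ?F j1 \<in> Lset ord b' c'"
    using assms(2) by (auto simp: Mstar_bc_def)
  then show ?thesis
    using dwork_operator_scaled_basisM[OF assms(1) unif_power_in_Rset] by (simp add: Lset_def)
qed

lemma dwork_operator_Gstar_continuity:
  fixes \<Theta> :: "('j, 'n::finite, 'k) mstar_op"
  assumes "dwork_operator ord \<sigma> \<Theta>"
  obtains K where "\<And>k u j1 w j2. K \<le> k \<Longrightarrow> vge ord (unif ^ k * Gstar \<Theta> u j1 w j2) N"
proof -
  obtain N' where N': "\<And>G. G \<in> Mstar ord \<Longrightarrow> \<forall>j u. vge ord (G j u - 0 j u) N' \<Longrightarrow>
      \<forall>j u. vge ord (\<Theta> G j u - \<Theta> 0 j u) N"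
    using dwork_operator_continuous_at[OF assms zero_in_Mstar] by blast
  show ?thesis
  proof
    fix k and u w :: "'n \<Rightarrow> nat" and j1 j2 :: 'j
    assume "nat \<lceil>N'\<rceil> \<le> k"
    then have "\<forall>j u. vge ord (unif ^ k * basisM w j2 j u - 0 j u) N'"
      by (auto simp: basisM_def vge_def cdvr_unif_power)
    then show "vge ord (unif ^ k * Gstar \<Theta> u j1 w j2) N"
      using N'[OF scaled_basisM_in_Mstar[OF unif_power_in_Rset]]
        dwork_operator_zero[OF assms] dwork_operator_scaled_basisM[OF assms unif_power_in_Rset]
      by simp
  qed
qed

lemma Gmat_vge_on_high_degree_rows:
  fixes \<Theta> :: "('j, 'n::finite, 'k) mstar_op"
  assumes "dwork_operator ord \<sigma> \<Theta>" "b > 0"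
    and "\<Theta> ` Mstar_bc ord (real b) c \<subseteq> Mstar_bc ord (real q * real b) (c + c1)"
  obtains N0 where "\<And>u j1 w j2. N0 \<le> absdeg u \<Longrightarrow> vge ord (Gmat unif b \<Theta> u j1 w j2) C"
proof
  define m where "m = nat \<lceil>c\<rceil>"
  fix u w :: "'n \<Rightarrow> nat" and j1 j2 :: 'j
  assume u: "nat \<lceil>C - c - c1 + m\<rceil> \<le> absdeg u"
  have "c \<le> real m"
    unfolding m_def by (rule real_nat_ceiling_ge)
  then have "vge ord (unif ^ m * (unif ^ (b * absdeg w) * Gstar \<Theta> u j1 w j2))
      (real q * real b * real (absdeg u) + (c + c1))"
    using contracting_Gstar_bound[OF assms(1,3), of w "m + b * absdeg w"]
    by (simp add: power_add mult.assoc)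
  then have bound: "vge ord (unif ^ (b * absdeg w) * Gstar \<Theta> u j1 w j2)
      (real q * real b * real (absdeg u) + (c + c1) - m)"
    by (simp add: vge_unif_power_mult_iff)
  have "b + 1 \<le> q * b"
    using mult_le_mono1[OF cdvr_residue_card_ge_2, of b] assms(2) by linarith
  then have "(b + 1) * absdeg u \<le> q * b * absdeg u"
    by (rule mult_le_mono1)
  then have "real b * real (absdeg u) + real (absdeg u) \<le> real q * real b * real (absdeg u)"
    by (metis distrib_right mult_1 of_nat_add of_nat_le_iff of_nat_mult)
  then show "vge ord (Gmat unif b \<Theta> u j1 w j2) C"
    using bound u by (simp add: Gmat_vge_iff[OF assms(1)]) (erule vge_mono, linarith)
qed

lemma finite_rows_scaled_Gstar_not_vge:
  fixes \<Theta> :: "('j, 'n::finite, 'k) mstar_op"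
  assumes "dwork_operator ord \<sigma> \<Theta>" "nuclear ord \<Theta>" "b > 0"
  shows "finite {j1. \<not> (\<forall>w j2. vge ord (unif ^ (b * absdeg w) * Gstar \<Theta> u j1 w j2) N)}"
proof -
  obtain W0 where high_columns:
    "\<And>k u j1 w j2. W0 \<le> k \<Longrightarrow> vge ord (unif ^ k * Gstar \<Theta> u j1 w j2) N"
    using dwork_operator_Gstar_continuity[OF assms(1)] by blast
  have bad_rows: "{j1. \<not> (\<forall>w j2. vge ord (unif ^ (b * absdeg w) * Gstar \<Theta> u j1 w j2) N)} \<subseteq>
      (\<Union>w\<in>{w. absdeg w < W0}. {j1. \<not> (\<forall>j2. vge ord (Gstar \<Theta> u j1 w j2) N)})"
  proof
    fix j1
    assume "j1 \<in> {j1. \<not> (\<forall>w j2. vge ord (unif ^ (b * absdeg w) * Gstar \<Theta> u j1 w j2) N)}"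
    then obtain w j2 where bad: "\<not> vge ord (unif ^ (b * absdeg w) * Gstar \<Theta> u j1 w j2) N"
      by blast
    have "absdeg w < W0"
    proof (rule ccontr)
      assume "\<not> absdeg w < W0"
      moreover have "absdeg w \<le> b * absdeg w"
        using assms(3) by (cases b) auto
      ultimately have "W0 \<le> b * absdeg w"
        by linarith
      then show False
        using bad high_columns by blast
    qed
    moreover have "\<not> vge ord (Gstar \<Theta> u j1 w j2) N"
      using bad vge_mono[of ord "Gstar \<Theta> u j1 w j2" N "N - real (b * absdeg w)"]
      by (auto simp: vge_unif_power_mult_iff)
    ultimately show "j1 \<in> (\<Union>w\<in>{w. absdeg w < W0}. {j1. \<not> (\<forall>j2. vge ord (Gstar \<Theta> u j1 w j2) N)})"
      by blast
  qed
  have nuclear_rows: "finite {j1. \<not> (\<forall>j2. vge ord (Gstar \<Theta> u j1 w j2) N)}" for w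
    using assms(2) unfolding nuclear_def eventually_cofinite by blast
  show ?thesis
    by (rule finite_subset[OF bad_rows]) (intro finite_UN_I finite_absdeg_less nuclear_rows)
qed

end

theorem lemma4p11:
  fixes ord :: "'k::field_char_0 \<Rightarrow> int" and unif :: 'k and q :: nat
    and f :: "'n::finite \<Rightarrow> ('n \<Rightarrow> nat) \<Rightarrow> 'k"
    and \<sigma> :: "(('n \<Rightarrow> nat) \<Rightarrow> 'k) \<Rightarrow> (('n \<Rightarrow> nat) \<Rightarrow> 'k)"
    and b_sigma :: real
    and \<Theta> :: "('j::countable \<Rightarrow> ('n \<Rightarrow> nat) \<Rightarrow> 'k) \<Rightarrow> ('j \<Rightarrow> ('n \<Rightarrow> nat) \<Rightarrow> 'k)"
    and b :: nat and c c1 :: real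
  assumes R: "cdvr ord unif q"
    and sig: "frobenius_lift ord unif q f \<sigma>"
    and bsig: "b_sigma \<in> \<rat>" "b_sigma > 0" "\<forall>i. (\<lambda>u. unif * f i u) \<in> Lset ord b_sigma 0"
    and dw: "dwork_operator ord \<sigma> \<Theta>"
    and nuc: "nuclear ord \<Theta>"
    and contr: "contracting ord q \<Theta>"
    and b: "b > 0" "real b \<le> b_sigma"
    and cc: "c \<in> \<rat>" "c1 \<in> \<rat>"
    and incl: "\<Theta> ` Mstar_bc ord (real b) c \<subseteq> Mstar_bc ord (real q * real b) (c + c1)"
  shows "\<forall>C::real. C > 0 \<longrightarrow>
           finite {(u, j1). \<not> (\<forall>w j2. vge ord (Gmat unif b \<Theta> u j1 w j2) C)}"
proof (intro allI impI)
  fix C :: real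
  obtain N0 where high_rows: "\<And>u j1 w j2. N0 \<le> absdeg u \<Longrightarrow> vge ord (Gmat unif b \<Theta> u j1 w j2) C"
    using Gmat_vge_on_high_degree_rows[OF R dw b(1) incl] by blast
  define D where "D = C + real b * real N0"
  have bad_entries: "{(u, j1). \<not> (\<forall>w j2. vge ord (Gmat unif b \<Theta> u j1 w j2) C)} \<subseteq>
      (\<Union>u\<in>{u. absdeg u < N0}.
        {u} \<times> {j1. \<not> (\<forall>w j2. vge ord (unif ^ (b * absdeg w) * Gstar \<Theta> u j1 w j2) D)})"
  proof
    fix x
    assume "x \<in> {(u, j1). \<not> (\<forall>w j2. vge ord (Gmat unif b \<Theta> u j1 w j2) C)}"
    then obtain u j1 w j2 where x: "x = (u, j1)" and bad: "\<not> vge ord (Gmat unif b \<Theta> u j1 w j2) C"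
      by blast
    then have u: "absdeg u < N0"
      using high_rows not_le by blast
    then have "real b * real (absdeg u) \<le> real b * real N0"
      by (simp add: mult_left_mono)
    then have "\<not> vge ord (unif ^ (b * absdeg w) * Gstar \<Theta> u j1 w j2) D"
      using bad vge_mono by (fastforce simp: Gmat_vge_iff[OF R dw] D_def)
    then show "x \<in> (\<Union>u\<in>{u. absdeg u < N0}.
        {u} \<times> {j1. \<not> (\<forall>w j2. vge ord (unif ^ (b * absdeg w) * Gstar \<Theta> u j1 w j2) D)})"
      using u x by blast
  qed
  show "finite {(u, j1). \<not> (\<forall>w j2. vge ord (Gmat unif b \<Theta> u j1 w j2) C)}"
    by (rule finite_subset[OF bad_entries])
      (intro finite_UN_I finite_absdeg_less finite_cartesian_product finite.insertI finite.emptyI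
        finite_rows_scaled_Gstar_not_vge[OF R dw nuc b(1)])
qed

end
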